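(* Let $d\ge1$ and let $\mathfrak{T}:\mathcal{S}(\mathbb{R}^{2d})\to\mathcal{S}'(\mathbb{R}^{2d})$ be a non-zero continuous linear operator such that there is a function $\Phi:\mathbb{R}^{4d}\to\mathbb{R}^{4d}$ with $\mathfrak{T}\rho(\lambda)F=c\,\rho(\Phi(\lambda))\mathfrak{T}F$ for all $\lambda\in\mathbb{R}^{4d}$, $F\in\mathcal{S}(\mathbb{R}^{2d})$ (with constants $c\in\mathbb{C}$ possibly depending on $\lambda$). Let $$H=\{\nu\in\mathbb{R}^{4d}:\ \exists\, c_\nu\in\mathbb{C}\text{ with }\rho(\nu)\mathfrak{T}F=c_\nu\mathfrak{T}F\text{ for all }F\in\mathcal{S}(\mathbb{R}^{2d})\}.$$ Then $H$ is a closed subgroup of $\mathbb{R}^{4d}$.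
   Context: For $x,\omega,t\in\mathbb{R}^{2d}$: $T_xF(t)=F(t-x)$, $M_\omega F(t)=e^{2\pi i\omega\cdot t}F(t)$, and for $(x,\omega)\in\mathbb{R}^{4d}$, $\rho(x,\omega)=T_{x/2}M_\omega T_{x/2}$, acting on $\mathcal{S}(\mathbb{R}^{2d})$ and by duality on $\mathcal{S}'(\mathbb{R}^{2d})$. Continuity of $\mathfrak{T}$ is from the Schwartz topology to the weak* topology. *)

theory Defs
  imports "HOL-Analysis.Analysis"
begin

text \<open>Functions on R^{2d} are modelled as maps real^'n => complex with CARD('n) = 2d.\<close>

definition pd :: "'n::finite \<Rightarrow> (real^'n \<Rightarrow> complex) \<Rightarrow> real^'n \<Rightarrow> complex" where
  "pd i f x = vector_derivative (\<lambda>s. f (x + s *\<^sub>R axis i 1)) (at 0)"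

fun pdl :: "'n::finite list \<Rightarrow> (real^'n \<Rightarrow> complex) \<Rightarrow> real^'n \<Rightarrow> complex" where
  "pdl [] f = f"
| "pdl (i # is) f = pd i (pdl is f)"

definition smooth_fun :: "(real^'n::finite \<Rightarrow> complex) \<Rightarrow> bool" where
  "smooth_fun f \<longleftrightarrow>
     (\<forall>is. continuous_on UNIV (pdl is f)) \<and>
     (\<forall>is i x. ((\<lambda>s. pdl is f (x + s *\<^sub>R axis i 1)) has_vector_derivative pdl (i # is) f x) (at 0))"

definition schwartz :: "(real^'n::finite \<Rightarrow> complex) set" where
  "schwartz = {f. smooth_fun f \<and>
     (\<forall>(N::nat) is. \<exists>C. \<forall>x. (1 + norm x) ^ N * norm (pdl is f x) \<le> C)}"

definition sch_seminorm :: "nat \<Rightarrow> (real^'n::finite \<Rightarrow> complex) \<Rightarrow> real" where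
  "sch_seminorm N f = (SUP x. (1 + norm x) ^ N * (\<Sum>is\<in>{is::'n list. length is \<le> N}. norm (pdl is f x)))"

definition lin_on_schwartz :: "((real^'n::finite \<Rightarrow> complex) \<Rightarrow> complex) \<Rightarrow> bool" where
  "lin_on_schwartz u \<longleftrightarrow> (\<forall>f\<in>schwartz. \<forall>g\<in>schwartz. \<forall>a b.
      u (\<lambda>x. a * f x + b * g x) = a * u f + b * u g)"

definition cont_on_schwartz :: "((real^'n::finite \<Rightarrow> complex) \<Rightarrow> complex) \<Rightarrow> bool" where
  "cont_on_schwartz u \<longleftrightarrow> (\<exists>C N. \<forall>f\<in>schwartz. norm (u f) \<le> C * sch_seminorm N f)"

definition tempered :: "((real^'n::finite \<Rightarrow> complex) \<Rightarrow> complex) \<Rightarrow> bool" where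
  "tempered u \<longleftrightarrow> lin_on_schwartz u \<and> cont_on_schwartz u"

text \<open>Continuous linear T : S -> S' (weak* topology): each T F is tempered, T is linear,
  and F |-> <T F, phi> is continuous on S for every phi in S.\<close>
definition cont_lin_op :: "((real^'n::finite \<Rightarrow> complex) \<Rightarrow> ((real^'n \<Rightarrow> complex) \<Rightarrow> complex)) \<Rightarrow> bool" where
  "cont_lin_op T \<longleftrightarrow>
     (\<forall>F\<in>schwartz. tempered (T F)) \<and>
     (\<forall>F\<in>schwartz. \<forall>G\<in>schwartz. \<forall>a b. \<forall>\<phi>\<in>schwartz.
        T (\<lambda>x. a * F x + b * G x) \<phi> = a * T F \<phi> + b * T G \<phi>) \<and>
     (\<forall>\<phi>\<in>schwartz. cont_on_schwartz (\<lambda>F. T F \<phi>))"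

definition transl :: "real^'n::finite \<Rightarrow> (real^'n \<Rightarrow> complex) \<Rightarrow> real^'n \<Rightarrow> complex" where
  "transl x F t = F (t - x)"

definition modul :: "real^'n::finite \<Rightarrow> (real^'n \<Rightarrow> complex) \<Rightarrow> real^'n \<Rightarrow> complex" where
  "modul w F t = exp (2 * of_real pi * \<i> * of_real (w \<bullet> t)) * F t"

definition rho :: "(real^'n::finite) \<times> (real^'n) \<Rightarrow> (real^'n \<Rightarrow> complex) \<Rightarrow> real^'n \<Rightarrow> complex" where
  "rho p F = transl ((1/2) *\<^sub>R fst p) (modul (snd p) (transl ((1/2) *\<^sub>R fst p) F))"

text \<open>Action on S' by duality (bilinear pairing): the transpose of rho(x,w) is rho(-x,w).\<close>
definition rho_dist :: "(real^'n::finite) \<times> (real^'n) \<Rightarrow> ((real^'n \<Rightarrow> complex) \<Rightarrow> complex)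
     \<Rightarrow> ((real^'n \<Rightarrow> complex) \<Rightarrow> complex)" where
  "rho_dist p u = (\<lambda>\<phi>. u (rho (- fst p, snd p) \<phi>))"

end

theory Submission
  imports Defs
begin

(* The operators rho(nu) form a projective representation of R^{4d} on the Schwartz space:
   rho(p) rho(q) = c(p, q) rho(p + q) with a unimodular cocycle c, and rho(0) = id.  Hence the set
   of nu acting on every T F by one common scalar is closed under addition and negation.
   It is closed because nu |-> <u, rho(nu) phi> is continuous for tempered u and Schwartz phi:
   derivatives of rho(x, w) phi are rho(x, w) applied to the twisted derivatives
   (d_i + 2 pi i w_i) phi, which gives a local Lipschitz bound for rho(nu) phi in every Schwartz
   seminorm.  H is then an intersection of zero sets of continuous functions. *)

lemma pdl_append: "pdl (js @ is) f = pdl js (pdl is f)"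
  by (induction js) auto

definition has_partial_derivative ::
    "(real^'n::finite \<Rightarrow> complex) \<Rightarrow> 'n \<Rightarrow> real^'n \<Rightarrow> complex \<Rightarrow> bool" where
  "has_partial_derivative f i x D \<longleftrightarrow>
     ((\<lambda>s. f (x + s *\<^sub>R axis i 1)) has_vector_derivative D) (at 0)"

lemma pd_eqI: "has_partial_derivative f i x D \<Longrightarrow> pd i f x = D"
  unfolding has_partial_derivative_def pd_def by (rule vector_derivative_at)

lemma smooth_fun_has_partial_derivative:
  "smooth_fun f \<Longrightarrow> has_partial_derivative (pdl is f) i x (pdl (i # is) f x)"
  unfolding smooth_fun_def has_partial_derivative_def by blast

lemma smooth_fun_has_pd: "smooth_fun f \<Longrightarrow> has_partial_derivative f i x (pd i f x)"
  using smooth_fun_has_partial_derivative[of f "[]"] by simp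

lemma smooth_fun_continuous_on: "smooth_fun f \<Longrightarrow> continuous_on UNIV (pdl is f)"
  unfolding smooth_fun_def by blast

lemma smooth_funI:
  assumes "\<And>is. continuous_on UNIV (pdl is f)"
    and "\<And>is i x. has_partial_derivative (pdl is f) i x (pdl (i # is) f x)"
  shows "smooth_fun f"
  using assms unfolding smooth_fun_def has_partial_derivative_def by blast

lemma smooth_fun_pdl: "smooth_fun f \<Longrightarrow> smooth_fun (pdl js f)"
  by (rule smooth_funI)
    (metis pdl_append smooth_fun_continuous_on, metis append_Cons pdl_append smooth_fun_has_partial_derivative)

lemma has_partial_derivative_lincomb:
  assumes "has_partial_derivative f i x Df" and "has_partial_derivative g i x Dg"
  shows "has_partial_derivative (\<lambda>x. a * f x + b * g x) i x (a * Df + b * Dg)"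
  using assms unfolding has_partial_derivative_def by (auto intro!: derivative_eq_intros)

lemma pdl_lincomb:
  assumes "smooth_fun f" and "smooth_fun g"
  shows "pdl is (\<lambda>x. a * f x + b * g x) = (\<lambda>x. a * pdl is f x + b * pdl is g x)"
proof (induction "is")
  case (Cons i "is")
  show ?case
    unfolding pdl.simps Cons.IH
    using has_partial_derivative_lincomb[OF smooth_fun_has_partial_derivative[OF assms(1)]
        smooth_fun_has_partial_derivative[OF assms(2)]]
    by (auto intro!: pd_eqI)
qed simp

lemma smooth_fun_lincomb:
  assumes "smooth_fun f" and "smooth_fun g"
  shows "smooth_fun (\<lambda>x. a * f x + b * g x)"
proof (rule smooth_funI, unfold pdl_lincomb[OF assms])
  show "continuous_on UNIV (\<lambda>x. a * pdl is f x + b * pdl is g x)" for "is"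
    using smooth_fun_continuous_on[OF assms(1)] smooth_fun_continuous_on[OF assms(2)]
    by (intro continuous_intros)
  show "has_partial_derivative (\<lambda>x. a * pdl is f x + b * pdl is g x) i x
      (a * pdl (i # is) f x + b * pdl (i # is) g x)" for "is" i x
    by (intro has_partial_derivative_lincomb smooth_fun_has_partial_derivative assms)
qed

definition rapidly_decreasing :: "('a::real_normed_vector \<Rightarrow> 'b::real_normed_vector) \<Rightarrow> bool" where
  "rapidly_decreasing g \<longleftrightarrow> (\<forall>N::nat. \<exists>C. \<forall>x. (1 + norm x) ^ N * norm (g x) \<le> C)"

lemma rapidly_decreasingE:
  assumes "rapidly_decreasing g"
  obtains C where "\<And>x. (1 + norm x) ^ N * norm (g x) \<le> C"
  using assms unfolding rapidly_decreasing_def by blast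

lemma schwartz_iff: "f \<in> schwartz \<longleftrightarrow> smooth_fun f \<and> (\<forall>is. rapidly_decreasing (pdl is f))"
  unfolding schwartz_def rapidly_decreasing_def by blast

lemma rapidly_decreasing_lincomb:
  fixes f g :: "'a::real_normed_vector \<Rightarrow> 'b::real_normed_field"
  assumes "rapidly_decreasing f" and "rapidly_decreasing g"
  shows "rapidly_decreasing (\<lambda>x. a * f x + b * g x)"
  unfolding rapidly_decreasing_def
proof
  fix N :: nat
  obtain C1 C2 where C1: "\<And>x. (1 + norm x) ^ N * norm (f x) \<le> C1"
    and C2: "\<And>x. (1 + norm x) ^ N * norm (g x) \<le> C2"
    using assms by (meson rapidly_decreasingE)
  have "(1 + norm x) ^ N * norm (a * f x + b * g x) \<le> norm a * C1 + norm b * C2" for x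
  proof -
    have "(1 + norm x) ^ N * norm (a * f x + b * g x)
        \<le> (1 + norm x) ^ N * (norm a * norm (f x) + norm b * norm (g x))"
      by (intro mult_left_mono) (auto intro: norm_triangle_le simp: norm_mult)
    also have "\<dots> = norm a * ((1 + norm x) ^ N * norm (f x)) + norm b * ((1 + norm x) ^ N * norm (g x))"
      by (simp add: algebra_simps)
    also have "\<dots> \<le> norm a * C1 + norm b * C2"
      by (intro add_mono mult_left_mono C1 C2 norm_ge_zero)
    finally show ?thesis .
  qed
  then show "\<exists>C. \<forall>x. (1 + norm x) ^ N * norm (a * f x + b * g x) \<le> C" by blast
qed

lemma schwartz_lincomb:
  assumes "f \<in> schwartz" and "g \<in> schwartz"
  shows "(\<lambda>x. a * f x + b * g x) \<in> schwartz"
  using assms unfolding schwartz_iff by (auto simp: pdl_lincomb smooth_fun_lincomb rapidly_decreasing_lincomb)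

lemma schwartz_pdl: "f \<in> schwartz \<Longrightarrow> pdl js f \<in> schwartz"
  unfolding schwartz_iff by (auto simp: smooth_fun_pdl pdl_append[symmetric])

lemma schwartz_pdl_rapidly_decreasing: "f \<in> schwartz \<Longrightarrow> rapidly_decreasing (pdl is f)"
  unfolding schwartz_iff by blast

definition rho_phase :: "real^'n::finite \<Rightarrow> real^'n \<Rightarrow> real^'n \<Rightarrow> complex" where
  "rho_phase x w t = exp (2 * of_real pi * \<i> * of_real (w \<bullet> (t - (1/2) *\<^sub>R x)))"

lemma norm_rho_phase [simp]: "norm (rho_phase x w t) = 1"
  unfolding rho_phase_def by (simp add: norm_exp_eq_Re)

lemma rho_apply: "rho (x, w) F t = rho_phase x w t * F (t - x)"
proof -
  have "t - (1/2) *\<^sub>R x - (1/2) *\<^sub>R x = t - x"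
    by (simp add: algebra_simps scaleR_2[symmetric])
  then show ?thesis unfolding rho_def transl_def modul_def rho_phase_def by simp
qed

lemma rho_zero: "rho 0 F = F"
  by (rule ext) (simp add: rho_apply[of 0 0, unfolded zero_prod_def[symmetric]] rho_phase_def)

definition rho_cocycle :: "(real^'n::finite) \<times> (real^'n) \<Rightarrow> (real^'n) \<times> (real^'n) \<Rightarrow> complex" where
  "rho_cocycle p q = exp (of_real pi * \<i> * of_real (snd p \<bullet> fst q - snd q \<bullet> fst p))"

lemma rho_cocycle_nonzero [simp]: "rho_cocycle p q \<noteq> 0"
  by (simp add: rho_cocycle_def)

lemma rho_rho: "rho p (rho q F) = (\<lambda>t. rho_cocycle p q * rho (p + q) F t)"
proof (rule ext)
  fix t
  obtain x w y v where pq: "p = (x, w)" "q = (y, v)" by fastforce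
  have "w \<bullet> (t - (1/2) *\<^sub>R x) + v \<bullet> (t - x - (1/2) *\<^sub>R y) =
      (w \<bullet> y - v \<bullet> x) / 2 + (w + v) \<bullet> (t - (1/2) *\<^sub>R (x + y))"
    by (simp add: inner_diff_right inner_add_right inner_add_left inner_commute algebra_simps divide_simps)
  from arg_cong[OF this, of "\<lambda>r. exp (2 * of_real pi * \<i> * of_real r)"]
  have "rho_phase x w t * rho_phase y v (t - x) = rho_cocycle p q * rho_phase (x + y) (w + v) t"
    unfolding rho_phase_def rho_cocycle_def pq exp_add[symmetric]
    by (simp add: algebra_simps)
  then show "rho p (rho q F) t = rho_cocycle p q * rho (p + q) F t"
    by (simp add: pq rho_apply diff_diff_add)
qed

definition twisted_pd :: "real^'n::finite \<Rightarrow> 'n \<Rightarrow> (real^'n \<Rightarrow> complex) \<Rightarrow> real^'n \<Rightarrow> complex" where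
  "twisted_pd w i g z = pd i g z + 2 * of_real pi * \<i> * of_real (w $ i) * g z"

fun twisted_pdl :: "real^'n::finite \<Rightarrow> 'n list \<Rightarrow> (real^'n \<Rightarrow> complex) \<Rightarrow> real^'n \<Rightarrow> complex" where
  "twisted_pdl w [] g = g"
| "twisted_pdl w (i # is) g = twisted_pd w i (twisted_pdl w is g)"

lemma pdl_twisted_pd:
  assumes "g \<in> schwartz"
  shows "pdl js (twisted_pd w i g) =
    (\<lambda>z. pdl (js @ [i]) g z + 2 * of_real pi * \<i> * of_real (w $ i) * pdl js g z)"
proof -
  have "smooth_fun (pdl [i] g)" and "smooth_fun g"
    using schwartz_pdl[OF assms, of "[i]"] assms by (auto simp: schwartz_iff)
  from pdl_lincomb[OF this, of js 1]
  show ?thesis by (simp add: twisted_pd_def[abs_def] pdl_append)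
qed

lemma schwartz_twisted_pdl: "g \<in> schwartz \<Longrightarrow> twisted_pdl w is g \<in> schwartz"
proof (induction "is")
  case (Cons i "is")
  then have "(\<lambda>z. 1 * pdl [i] (twisted_pdl w is g) z + (2 * of_real pi * \<i> * of_real (w $ i))
      * twisted_pdl w is g z) \<in> schwartz"
    by (intro schwartz_lincomb schwartz_pdl)
  then show ?case by (simp add: twisted_pd_def[abs_def])
qed simp

lemma has_partial_derivative_rho:
  assumes "has_partial_derivative g i (t - x) D"
  shows "has_partial_derivative (rho (x, w) g) i t
           (rho_phase x w t * (D + 2 * of_real pi * \<i> * of_real (w $ i) * g (t - x)))"
proof -
  define a where "a = 2 * of_real pi * \<i> * of_real (w \<bullet> (t - (1/2) *\<^sub>R x))"
  define b where "b = 2 * of_real pi * \<i> * of_real (w $ i)"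
  have phase: "rho_phase x w (t + s *\<^sub>R axis i 1) = exp (a + of_real s * b)" for s
  proof -
    have "w \<bullet> (t + s *\<^sub>R axis i 1 - (1/2) *\<^sub>R x) = w \<bullet> (t - (1/2) *\<^sub>R x) + s * w $ i"
      by (simp add: inner_diff_right inner_add_right cart_eq_inner_axis[symmetric] algebra_simps)
    then show ?thesis
      unfolding rho_phase_def a_def b_def by (simp add: algebra_simps cart_eq_inner_axis[symmetric])
  qed
  have "((\<lambda>z. exp (a + z * b)) has_field_derivative exp a * b) (at (of_real 0))"
    by (auto intro!: derivative_eq_intros)
  then have "((\<lambda>s. exp (a + of_real s * b)) has_vector_derivative exp a * b) (at 0)"
    using has_vector_derivative_real_field by fastforce
  from has_vector_derivative_mult[OF this assms[unfolded has_partial_derivative_def]]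
  have "((\<lambda>s. rho (x, w) g (t + s *\<^sub>R axis i 1)) has_vector_derivative
      exp a * D + exp a * b * g (t - x)) (at 0)"
    by (simp add: rho_apply phase algebra_simps)
  moreover have "rho_phase x w t = exp a" using phase[of 0] by simp
  ultimately show ?thesis
    unfolding has_partial_derivative_def b_def by (simp add: algebra_simps)
qed

lemma pdl_rho:
  assumes "g \<in> schwartz"
  shows "pdl is (rho (x, w) g) = rho (x, w) (twisted_pdl w is g)"
proof (induction "is")
  case (Cons i "is")
  have "smooth_fun (twisted_pdl w is g)"
    using schwartz_twisted_pdl[OF assms] by (simp add: schwartz_iff)
  from has_partial_derivative_rho[OF smooth_fun_has_pd[OF this], of x w]
  have "pd i (rho (x, w) (twisted_pdl w is g)) t = rho (x, w) (twisted_pdl w (i # is) g) t" for t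
    by (intro pd_eqI) (simp add: rho_apply twisted_pd_def)
  then show ?case
    by (simp add: Cons.IH)
qed simp

lemma weight_add_le:
  fixes a b :: "'a::real_normed_vector"
  shows "(1 + norm (a + b)) ^ N \<le> (1 + norm a) ^ N * (1 + norm b) ^ N"
proof -
  have "1 + norm (a + b) \<le> 1 + norm a + norm b + norm a * norm b"
    using norm_triangle_ineq[of a b] mult_nonneg_nonneg[OF norm_ge_zero norm_ge_zero, of a b]
    by linarith
  also have "\<dots> = (1 + norm a) * (1 + norm b)"
    by (simp add: algebra_simps)
  finally show ?thesis
    by (metis power_mono power_mult_distrib add_nonneg_nonneg norm_ge_zero zero_le_one)
qed

lemma weighted_bound_shift:
  fixes f :: "'a::real_normed_vector \<Rightarrow> 'b::real_normed_vector"
  assumes bound: "\<And>s. (1 + norm s) ^ N * norm (f s) \<le> C" and x: "norm x \<le> r"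
  shows "(1 + norm t) ^ N * norm (f (t - x)) \<le> (1 + r) ^ N * C"
proof -
  have "(1 + norm t) ^ N \<le> (1 + norm x) ^ N * (1 + norm (t - x)) ^ N"
    using weight_add_le[of x "t - x" N] by simp
  also have "\<dots> \<le> (1 + r) ^ N * (1 + norm (t - x)) ^ N"
    using x by (intro mult_right_mono power_mono) auto
  finally have "(1 + norm t) ^ N * norm (f (t - x))
      \<le> (1 + r) ^ N * ((1 + norm (t - x)) ^ N * norm (f (t - x)))"
    by (rule mult_right_mono[OF _ norm_ge_zero, THEN order_trans]) (simp add: mult.assoc)
  also have "\<dots> \<le> (1 + r) ^ N * C"
    using x norm_ge_zero[of x] by (intro mult_left_mono bound zero_le_power) linarith
  finally show ?thesis .
qed

lemma rapidly_decreasing_shift: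
  fixes h :: "'a::real_normed_vector \<Rightarrow> 'b::real_normed_div_algebra"
  assumes "rapidly_decreasing h" and "\<And>t. norm (c t) = 1"
  shows "rapidly_decreasing (\<lambda>t. c t * h (t - x))"
  unfolding rapidly_decreasing_def
proof
  fix N :: nat
  obtain C where C: "\<And>s. (1 + norm s) ^ N * norm (h s) \<le> C"
    using assms(1) by (meson rapidly_decreasingE)
  from weighted_bound_shift[where x = x, OF C order_refl]
  have "(1 + norm t) ^ N * norm (c t * h (t - x)) \<le> (1 + norm x) ^ N * C" for t
    by (simp add: norm_mult assms(2))
  then show "\<exists>C. \<forall>t. (1 + norm t) ^ N * norm (c t * h (t - x)) \<le> C"
    by blast
qed

lemma schwartz_rho:
  assumes "g \<in> schwartz"
  shows "rho p g \<in> schwartz"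
proof -
  obtain x w where p: "p = (x, w)" by fastforce
  have twisted: "twisted_pdl w is g \<in> schwartz" for "is"
    by (rule schwartz_twisted_pdl[OF assms])
  have smooth: "smooth_fun (twisted_pdl w is g)" for "is"
    using twisted by (simp add: schwartz_iff)
  have rapid: "rapidly_decreasing (twisted_pdl w is g)" for "is"
    using schwartz_pdl_rapidly_decreasing[OF twisted, of "[]"] by simp
  show ?thesis unfolding schwartz_iff p
  proof (intro conjI allI smooth_funI)
    show "continuous_on UNIV (pdl is (rho (x, w) g))" for "is"
    proof -
      have "continuous_on UNIV (twisted_pdl w is g)"
        using smooth_fun_continuous_on[OF smooth, of "[]" "is"] by simp
      from continuous_on_compose2[OF this continuous_on_diff[OF continuous_on_id continuous_on_const]]
      have "continuous_on UNIV (\<lambda>t. twisted_pdl w is g (t - x))"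
        by simp
      then show ?thesis
        unfolding pdl_rho[OF assms] unfolding rho_apply[abs_def] rho_phase_def
        by (intro continuous_intros)
    qed
    show "has_partial_derivative (pdl is (rho (x, w) g)) i t (pdl (i # is) (rho (x, w) g) t)"
      for "is" i t
    proof -
      have "has_partial_derivative (twisted_pdl w is g) i (t - x) (pd i (twisted_pdl w is g) (t - x))"
        by (rule smooth_fun_has_pd[OF smooth])
      from has_partial_derivative_rho[OF this, of w]
      show ?thesis by (simp add: pdl_rho[OF assms] rho_apply twisted_pd_def)
    qed
    show "rapidly_decreasing (pdl is (rho (x, w) g))" for "is"
      unfolding pdl_rho[OF assms] unfolding rho_apply[abs_def]
      by (rule rapidly_decreasing_shift[OF rapid]) simp
  qed
qed

lemma norm_diff_le_vector_derivative_bound: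
  fixes f :: "real \<Rightarrow> 'a::real_normed_vector"
  assumes "\<And>\<tau>. \<tau> \<in> closed_segment 0 c \<Longrightarrow> (f has_vector_derivative f' \<tau>) (at \<tau>)"
    and "\<And>\<tau>. \<tau> \<in> closed_segment 0 c \<Longrightarrow> norm (f' \<tau>) \<le> B"
  shows "norm (f c - f 0) \<le> B * \<bar>c\<bar>"
proof -
  have "norm (f c - f 0) \<le> B * norm (c - 0)"
  proof (rule differentiable_bound[where f' = "\<lambda>\<tau> h. h *\<^sub>R f' \<tau>"])
    show "(f has_derivative (\<lambda>h. h *\<^sub>R f' \<tau>)) (at \<tau> within closed_segment 0 c)"
      if "\<tau> \<in> closed_segment 0 c" for \<tau>
      using assms(1)[OF that] has_vector_derivative_at_within unfolding has_vector_derivative_def by blast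
    show "onorm (\<lambda>h. h *\<^sub>R f' \<tau>) \<le> B" if "\<tau> \<in> closed_segment 0 c" for \<tau>
      using assms(2)[OF that] by (simp add: onorm_scaleR_left[OF bounded_linear_ident] onorm_id)
  qed auto
  then show ?thesis by simp
qed

lemma norm_exp_i_diff_le: "norm (exp (\<i> * of_real a) - exp (\<i> * of_real b)) \<le> \<bar>a - b\<bar>"
proof -
  define f where "f \<tau> = exp (\<i> * of_real (b + \<tau>))" for \<tau>
  have "((\<lambda>z. exp (\<i> * (of_real b + z))) has_field_derivative exp (\<i> * (of_real b + of_real \<tau>)) * \<i>)
      (at (of_real \<tau>))" for \<tau>
    by (auto intro!: derivative_eq_intros)
  from has_vector_derivative_real_field[OF this]
  have "(f has_vector_derivative \<i> * f \<tau>) (at \<tau>)" for \<tau>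
    unfolding f_def by (simp add: algebra_simps)
  moreover have "norm (\<i> * f \<tau>) \<le> 1" for \<tau>
    unfolding f_def by (simp add: norm_mult norm_exp_eq_Re)
  ultimately have "norm (f (a - b) - f 0) \<le> 1 * \<bar>a - b\<bar>"
    by (intro norm_diff_le_vector_derivative_bound)
  then show ?thesis unfolding f_def by simp
qed

lemma inner_diff_bound:
  fixes x w x0 w0 t :: "'a::real_inner"
  assumes x: "norm (x - x0) \<le> \<delta>" and w: "norm (w - w0) \<le> \<delta>" and "\<delta> \<le> 1"
  shows "\<bar>w \<bullet> (t - (1/2) *\<^sub>R x) - w0 \<bullet> (t - (1/2) *\<^sub>R x0)\<bar>
           \<le> \<delta> * (norm x0 + norm w0 + 2) * (1 + norm t)"
proof -
  have "0 \<le> \<delta>" using x norm_ge_zero order_trans by blast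
  have "norm x \<le> norm x0 + 1"
    using norm_triangle_ineq[of x0 "x - x0"] x \<open>\<delta> \<le> 1\<close> by simp
  have abs_triangle: "\<bar>a - (b + c) / 2\<bar> \<le> \<bar>a\<bar> + \<bar>b\<bar> + \<bar>c\<bar>" for a b c :: real
    by (auto simp: abs_if field_simps)
  have "w \<bullet> (t - (1/2) *\<^sub>R x) - w0 \<bullet> (t - (1/2) *\<^sub>R x0)
      = (w - w0) \<bullet> t - ((w - w0) \<bullet> x + w0 \<bullet> (x - x0)) / 2"
    by (simp add: inner_diff_left inner_diff_right algebra_simps divide_simps)
  also have "\<bar>\<dots>\<bar> \<le> \<bar>(w - w0) \<bullet> t\<bar> + \<bar>(w - w0) \<bullet> x\<bar> + \<bar>w0 \<bullet> (x - x0)\<bar>"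
    by (rule abs_triangle)
  also have "\<dots> \<le> \<delta> * norm t + \<delta> * (norm x0 + 1) + norm w0 * \<delta>"
  proof (intro add_mono)
    show "\<bar>(w - w0) \<bullet> t\<bar> \<le> \<delta> * norm t"
      by (rule order_trans[OF Cauchy_Schwarz_ineq2 mult_right_mono[OF w norm_ge_zero]])
    show "\<bar>(w - w0) \<bullet> x\<bar> \<le> \<delta> * (norm x0 + 1)"
      by (rule order_trans[OF Cauchy_Schwarz_ineq2 mult_mono[OF w \<open>norm x \<le> norm x0 + 1\<close>]])
        (use \<open>0 \<le> \<delta>\<close> in auto)
    show "\<bar>w0 \<bullet> (x - x0)\<bar> \<le> norm w0 * \<delta>"
      by (rule order_trans[OF Cauchy_Schwarz_ineq2 mult_left_mono[OF x norm_ge_zero]])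
  qed
  also have "\<dots> \<le> \<delta> * (norm x0 + norm w0 + 2) * (1 + norm t)"
    using mult_nonneg_nonneg[OF \<open>0 \<le> \<delta>\<close>, of "norm t * (norm x0 + norm w0 + 1)"] \<open>0 \<le> \<delta>\<close>
    by (simp add: algebra_simps)
  finally show ?thesis .
qed

lemma norm_rho_phase_diff_le:
  assumes "norm (x - x0) \<le> \<delta>" and "norm (w - w0) \<le> \<delta>" and "\<delta> \<le> 1"
  shows "norm (rho_phase x w t - rho_phase x0 w0 t)
           \<le> 2 * pi * (norm x0 + norm w0 + 2) * \<delta> * (1 + norm t)"
proof -
  have phase: "rho_phase x w t = exp (\<i> * of_real (2 * pi * (w \<bullet> (t - (1/2) *\<^sub>R x))))" for x w
    unfolding rho_phase_def by (simp add: algebra_simps)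
  have "norm (rho_phase x w t - rho_phase x0 w0 t)
      \<le> \<bar>2 * pi * (w \<bullet> (t - (1/2) *\<^sub>R x)) - 2 * pi * (w0 \<bullet> (t - (1/2) *\<^sub>R x0))\<bar>"
    unfolding phase by (rule norm_exp_i_diff_le)
  also have "\<dots> = 2 * pi * \<bar>w \<bullet> (t - (1/2) *\<^sub>R x) - w0 \<bullet> (t - (1/2) *\<^sub>R x0)\<bar>"
    by (simp add: abs_mult flip: right_diff_distrib)
  also have "\<dots> \<le> 2 * pi * (\<delta> * (norm x0 + norm w0 + 2) * (1 + norm t))"
    by (intro mult_left_mono inner_diff_bound assms) simp
  finally show ?thesis by (simp add: algebra_simps)
qed

lemma weighted_rho_phase_diff_bound:
  assumes h: "\<And>s. (1 + norm s) ^ Suc N * norm (h s) \<le> B"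
    and x: "norm (x - x0) \<le> \<delta>" and w: "norm (w - w0) \<le> \<delta>" and "\<delta> \<le> 1"
  shows "(1 + norm t) ^ N * norm ((rho_phase x w t - rho_phase x0 w0 t) * h (t - x))
           \<le> 2 * pi * (norm x0 + norm w0 + 2) * (2 + norm x0) ^ Suc N * B * \<delta>"
proof -
  define A where "A = 2 * pi * (norm x0 + norm w0 + 2)"
  have "0 \<le> \<delta>" using x norm_ge_zero order_trans by blast
  have "norm x \<le> 1 + norm x0"
    using norm_triangle_ineq[of x0 "x - x0"] x \<open>\<delta> \<le> 1\<close> by simp
  have "(1 + norm t) ^ N * norm ((rho_phase x w t - rho_phase x0 w0 t) * h (t - x))
      \<le> (1 + norm t) ^ N * (A * \<delta> * (1 + norm t) * norm (h (t - x)))"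
    unfolding norm_mult A_def
    by (intro mult_left_mono mult_right_mono norm_rho_phase_diff_le assms) simp_all
  also have "\<dots> = A * \<delta> * ((1 + norm t) ^ Suc N * norm (h (t - x)))"
    by (simp add: algebra_simps)
  also have "\<dots> \<le> A * \<delta> * ((1 + (1 + norm x0)) ^ Suc N * B)"
    using \<open>0 \<le> \<delta>\<close> unfolding A_def
    by (intro mult_left_mono weighted_bound_shift[OF h \<open>norm x \<le> 1 + norm x0\<close>]) simp_all
  finally show ?thesis
    unfolding A_def by (simp add: algebra_simps)
qed

lemma has_vector_derivative_along_axis:
  assumes "\<And>\<tau>. has_partial_derivative h k (p + \<tau> *\<^sub>R axis k 1) (D \<tau>)"
  shows "((\<lambda>\<tau>. h (p + \<tau> *\<^sub>R axis k 1)) has_vector_derivative D \<tau>) (at \<tau>)"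
proof -
  have "((\<lambda>\<sigma>. h ((p + \<tau> *\<^sub>R axis k 1) + \<sigma> *\<^sub>R axis k 1)) has_vector_derivative D \<tau>)
      (at ((\<lambda>\<tau>'. \<tau>' - \<tau>) \<tau>))"
    using assms[of \<tau>] unfolding has_partial_derivative_def by simp
  moreover have "((\<lambda>\<tau>'. \<tau>' - \<tau>) has_vector_derivative 1) (at \<tau>)"
    by (auto intro!: derivative_eq_intros)
  ultimately show ?thesis
    using vector_diff_chain_at by (fastforce simp: o_def algebra_simps)
qed

lemma norm_diff_along_axis_le:
  assumes "smooth_fun h"
    and "\<And>\<tau>. \<tau> \<in> closed_segment 0 c \<Longrightarrow> norm (pd k h (p + \<tau> *\<^sub>R axis k 1)) \<le> M"
  shows "norm (h (p + c *\<^sub>R axis k 1) - h p) \<le> M * \<bar>c\<bar>"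
  using norm_diff_le_vector_derivative_bound[where f = "\<lambda>\<tau>. h (p + \<tau> *\<^sub>R axis k 1)",
      OF has_vector_derivative_along_axis[OF smooth_fun_has_pd[OF assms(1)]] assms(2)]
  by simp

(* Mean value estimate one coordinate at a time: smooth_fun only provides partial derivatives,
   not a Frechet derivative. *)
lemma norm_diff_le_partials_bound:
  fixes h :: "real^'n::finite \<Rightarrow> complex"
  assumes smooth: "smooth_fun h"
    and M: "\<And>k z. norm (z - s) \<le> (\<Sum>j\<in>UNIV. \<bar>y $ j\<bar>) \<Longrightarrow> norm (pd k h z) \<le> M"
  shows "norm (h (s - y) - h s) \<le> M * (\<Sum>j\<in>UNIV. \<bar>y $ j\<bar>)"
proof -
  have "norm (h (s - (\<Sum>j\<in>K. y $ j *\<^sub>R axis j 1)) - h s) \<le> M * (\<Sum>j\<in>K. \<bar>y $ j\<bar>)"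
    if "finite K" for K :: "'n set"
    using that
  proof (induction K rule: finite_induct)
    case (insert k K)
    define p where "p = s - (\<Sum>j\<in>K. y $ j *\<^sub>R axis j 1)"
    have "norm (h (p + (- y $ k) *\<^sub>R axis k 1) - h p) \<le> M * \<bar>- y $ k\<bar>"
    proof (rule norm_diff_along_axis_le[OF smooth M])
      fix \<tau> assume "\<tau> \<in> closed_segment 0 (- y $ k)"
      then have "\<bar>\<tau>\<bar> \<le> \<bar>y $ k\<bar>" using segment_bound1 by fastforce
      have "norm (p + \<tau> *\<^sub>R axis k 1 - s) = norm (\<tau> *\<^sub>R axis k (1::real) - (\<Sum>j\<in>K. y $ j *\<^sub>R axis j 1))"
        unfolding p_def by (simp add: algebra_simps)
      also have "\<dots> \<le> norm (\<tau> *\<^sub>R axis k (1::real)) + norm (\<Sum>j\<in>K. y $ j *\<^sub>R axis j (1::real))"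
        by (rule norm_triangle_ineq4)
      also have "\<dots> \<le> \<bar>y $ k\<bar> + (\<Sum>j\<in>K. \<bar>y $ j\<bar>)"
      proof (rule add_mono)
        show "norm (\<Sum>j\<in>K. y $ j *\<^sub>R axis j (1::real)) \<le> (\<Sum>j\<in>K. \<bar>y $ j\<bar>)"
          by (rule order_trans[OF norm_sum]) simp
      qed (use \<open>\<bar>\<tau>\<bar> \<le> \<bar>y $ k\<bar>\<close> in simp)
      also have "\<dots> = (\<Sum>j\<in>insert k K. \<bar>y $ j\<bar>)"
        using insert by simp
      also have "\<dots> \<le> (\<Sum>j\<in>UNIV. \<bar>y $ j\<bar>)"
        by (rule sum_mono2) auto
      finally show "norm (p + \<tau> *\<^sub>R axis k 1 - s) \<le> (\<Sum>j\<in>UNIV. \<bar>y $ j\<bar>)" .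
    qed
    moreover have "p + (- y $ k) *\<^sub>R axis k 1 = s - (\<Sum>j\<in>insert k K. y $ j *\<^sub>R axis j 1)"
      unfolding p_def using insert by (simp add: algebra_simps)
    ultimately have "norm (h (s - (\<Sum>j\<in>insert k K. y $ j *\<^sub>R axis j 1)) - h p) \<le> M * \<bar>y $ k\<bar>"
      by simp
    moreover have "norm (h p - h s) \<le> M * (\<Sum>j\<in>K. \<bar>y $ j\<bar>)"
      using insert.IH unfolding p_def .
    ultimately show ?case
      using insert by (simp add: distrib_left norm_diff_triangle_le)
  qed simp
  from this[of UNIV] show ?thesis
    using basis_expansion[of y] by (simp add: scalar_mult_eq_scaleR)
qed

lemma schwartz_pd_weighted_bound:
  assumes "h \<in> schwartz"
  obtains B where "0 \<le> B" and "\<And>k z. (1 + norm z) ^ N * norm (pd k h z) \<le> B"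
proof -
  have "\<forall>k. \<exists>C. \<forall>z. (1 + norm z) ^ N * norm (pd k h z) \<le> C"
    using schwartz_pdl_rapidly_decreasing[OF assms, of "[_]"] unfolding rapidly_decreasing_def by simp
  then obtain C where C: "\<And>k z. (1 + norm z) ^ N * norm (pd k h z) \<le> C k"
    by metis
  have C0: "0 \<le> C k" for k
    by (rule order_trans[OF _ C[where k = k and z = 0]]) simp
  show ?thesis
  proof (rule that)
    show "0 \<le> (\<Sum>k\<in>UNIV. C k)"
      using C0 by (simp add: sum_nonneg)
    show "(1 + norm z) ^ N * norm (pd k h z) \<le> (\<Sum>k\<in>UNIV. C k)" for k z
      using C0 by (intro order_trans[OF C[where k = k] member_le_sum[where f = C]]) auto
  qed
qed

lemma sum_abs_component_le: "(\<Sum>j\<in>UNIV. \<bar>y $ j\<bar>) \<le> real CARD('n) * norm (y :: real^'n::finite)"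
proof -
  have "(\<Sum>j\<in>UNIV. \<bar>y $ j\<bar>) \<le> (\<Sum>j\<in>(UNIV::'n set). norm y)"
    by (rule sum_mono) (rule component_le_norm_cart)
  then show ?thesis by simp
qed

lemma schwartz_translation_lipschitz:
  fixes h :: "real^'n::finite \<Rightarrow> complex"
  assumes "h \<in> schwartz"
  shows "\<exists>C. \<forall>y s. norm y \<le> 1 \<longrightarrow> (1 + norm s) ^ N * norm (h (s - y) - h s) \<le> C * norm y"
proof -
  obtain B where "0 \<le> B" and B: "\<And>k z. (1 + norm z) ^ N * norm (pd k h z) \<le> B"
    using schwartz_pd_weighted_bound[OF assms] by blast
  define R where "R = real CARD('n)"
  have "(1 + norm s) ^ N * norm (h (s - y) - h s) \<le> ((1 + R) ^ N * B * R) * norm y"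
    if "norm y \<le> 1" for y s
  proof -
    have weight_pos: "0 < (1 + norm s) ^ N"
      by (simp add: add_pos_nonneg)
    have l1: "(\<Sum>j\<in>UNIV. \<bar>y $ j\<bar>) \<le> R * norm y"
      unfolding R_def by (rule sum_abs_component_le)
    have "norm (h (s - y) - h s) \<le> (1 + R) ^ N * B / (1 + norm s) ^ N * (\<Sum>j\<in>UNIV. \<bar>y $ j\<bar>)"
    proof (rule norm_diff_le_partials_bound)
      show "smooth_fun h" using assms by (simp add: schwartz_iff)
      fix k z assume "norm (z - s) \<le> (\<Sum>j\<in>UNIV. \<bar>y $ j\<bar>)"
      with l1 \<open>norm y \<le> 1\<close> have "norm (s - z) \<le> R"
        unfolding R_def by (smt (verit) norm_minus_commute mult_left_le of_nat_0_le_iff)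
      from weighted_bound_shift[OF B[where k = k] this, of s]
      show "norm (pd k h z) \<le> (1 + R) ^ N * B / (1 + norm s) ^ N"
        using weight_pos by (simp add: field_simps)
    qed
    then have "(1 + norm s) ^ N * norm (h (s - y) - h s) \<le> (1 + R) ^ N * B * (\<Sum>j\<in>UNIV. \<bar>y $ j\<bar>)"
      using weight_pos by (simp add: field_simps)
    also have "\<dots> \<le> (1 + R) ^ N * B * (R * norm y)"
      using l1 \<open>0 \<le> B\<close> by (intro mult_left_mono) (auto simp: R_def)
    finally show ?thesis by (simp add: mult.assoc)
  qed
  then show ?thesis by blast
qed

lemma twisted_pdl_lipschitz:
  fixes g :: "real^'n::finite \<Rightarrow> complex"
  assumes g: "g \<in> schwartz"
  shows "\<exists>C. \<forall>w t. norm (w - w0) \<le> 1 \<longrightarrow>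
     (1 + norm t) ^ N * norm (pdl js (twisted_pdl w is g) t - pdl js (twisted_pdl w0 is g) t)
       \<le> C * norm (w - w0)"
proof (induction "is" arbitrary: js N)
  case (Cons i "is")
  define h where "h w = twisted_pdl w is g" for w
  define c where "c w = 2 * of_real pi * \<i> * of_real (w $ i)" for w :: "real^'n"
  obtain C1 where C1: "\<And>w t. norm (w - w0) \<le> 1 \<Longrightarrow>
      (1 + norm t) ^ N * norm (pdl (js @ [i]) (h w) t - pdl (js @ [i]) (h w0) t) \<le> C1 * norm (w - w0)"
    using Cons.IH unfolding h_def by blast
  obtain C2 where C2: "\<And>w t. norm (w - w0) \<le> 1 \<Longrightarrow>
      (1 + norm t) ^ N * norm (pdl js (h w) t - pdl js (h w0) t) \<le> C2 * norm (w - w0)"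
    using Cons.IH unfolding h_def by blast
  have h: "h w \<in> schwartz" for w
    unfolding h_def by (rule schwartz_twisted_pdl[OF g])
  obtain B where B: "\<And>t. (1 + norm t) ^ N * norm (pdl js (h w0) t) \<le> B"
    using schwartz_pdl_rapidly_decreasing[OF h] by (meson rapidly_decreasingE)
  define K where "K = \<bar>C1\<bar> + 2 * pi * (norm w0 + 1) * \<bar>C2\<bar> + 2 * pi * \<bar>B\<bar>"
  have "(1 + norm t) ^ N * norm (pdl js (twisted_pdl w (i # is) g) t - pdl js (twisted_pdl w0 (i # is) g) t)
      \<le> K * norm (w - w0)" if w: "norm (w - w0) \<le> 1" for w t
  proof -
    define W where "W = (1 + norm t) ^ N"
    define \<delta> where "\<delta> = norm (w - w0)"
    define a1 where "a1 = pdl (js @ [i]) (h w) t - pdl (js @ [i]) (h w0) t"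
    define d where "d = pdl js (h w) t - pdl js (h w0) t"
    define a0 where "a0 = pdl js (h w0) t"
    have eq: "pdl js (twisted_pdl w (i # is) g) t - pdl js (twisted_pdl w0 (i # is) g) t
        = a1 + c w * d + (c w - c w0) * a0"
      by (simp add: pdl_twisted_pd[OF h[unfolded h_def]] a1_def d_def a0_def c_def h_def algebra_simps)
    have tri: "norm (a1 + c w * d + (c w - c w0) * a0)
        \<le> norm a1 + norm (c w) * norm d + norm (c w - c w0) * norm a0"
      using norm_triangle_ineq[of "a1 + c w * d" "(c w - c w0) * a0"] norm_triangle_ineq[of a1 "c w * d"]
      unfolding norm_mult by linarith
    have "W * norm (pdl js (twisted_pdl w (i # is) g) t - pdl js (twisted_pdl w0 (i # is) g) t)
        \<le> W * (norm a1 + norm (c w) * norm d + norm (c w - c w0) * norm a0)"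
      unfolding eq by (rule mult_left_mono[OF tri]) (simp add: W_def)
    also have "\<dots> = W * norm a1 + norm (c w) * (W * norm d) + norm (c w - c w0) * (W * norm a0)"
      by (simp add: algebra_simps)
    also have "\<dots> \<le> \<bar>C1\<bar> * \<delta> + (2 * pi * (norm w0 + 1)) * (\<bar>C2\<bar> * \<delta>) + (2 * pi * \<delta>) * \<bar>B\<bar>"
    proof -
      have "\<bar>w $ i\<bar> \<le> norm w0 + 1"
        using component_le_norm_cart[of w i] norm_triangle_ineq[of w0 "w - w0"] w by simp
      then have "norm (c w) \<le> 2 * pi * (norm w0 + 1)"
        unfolding c_def by (simp add: norm_mult)
      moreover have "W * norm d \<le> \<bar>C2\<bar> * \<delta>"
        using C2[OF w, of t] unfolding W_def d_def \<delta>_def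
        by (smt (verit) abs_ge_self mult_right_mono norm_ge_zero)
      ultimately have "norm (c w) * (W * norm d) \<le> (2 * pi * (norm w0 + 1)) * (\<bar>C2\<bar> * \<delta>)"
        by (rule mult_mono) (simp_all add: W_def)
      moreover have "norm (c w - c w0) \<le> 2 * pi * \<delta>"
        using component_le_norm_cart[of "w - w0" i]
        unfolding c_def \<delta>_def by (simp add: norm_mult flip: of_real_diff right_diff_distrib)
      then have "norm (c w - c w0) * (W * norm a0) \<le> (2 * pi * \<delta>) * \<bar>B\<bar>"
      proof (rule mult_mono)
        show "W * norm a0 \<le> \<bar>B\<bar>"
          unfolding W_def a0_def by (rule order_trans[OF B abs_ge_self])
      qed (simp_all add: W_def \<delta>_def)
      moreover have "W * norm a1 \<le> \<bar>C1\<bar> * \<delta>"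
        using C1[OF w, of t] unfolding W_def a1_def \<delta>_def
        by (smt (verit) abs_ge_self mult_right_mono norm_ge_zero)
      ultimately show ?thesis
        by linarith
    qed
    finally show ?thesis
      unfolding K_def W_def \<delta>_def by (simp add: algebra_simps)
  qed
  then show ?case by blast
qed (auto intro: exI[of _ 0])

lemma pdl_rho_lipschitz:
  fixes \<phi> :: "real^'n::finite \<Rightarrow> complex"
  assumes \<phi>: "\<phi> \<in> schwartz"
  shows "\<exists>K. \<forall>p t. dist p p0 \<le> 1 \<longrightarrow>
     (1 + norm t) ^ N * norm (pdl is (rho p \<phi>) t - pdl is (rho p0 \<phi>) t) \<le> K * dist p p0"
proof -
  obtain x0 w0 where p0: "p0 = (x0, w0)" by fastforce
  define h where "h w = twisted_pdl w is \<phi>" for w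
  have h0: "h w0 \<in> schwartz"
    unfolding h_def by (rule schwartz_twisted_pdl[OF \<phi>])
  obtain C1 where C1: "\<And>w t. norm (w - w0) \<le> 1 \<Longrightarrow>
      (1 + norm t) ^ N * norm (h w t - h w0 t) \<le> C1 * norm (w - w0)"
    using twisted_pdl_lipschitz[OF \<phi>, of w0 N "[]" "is"] unfolding h_def by auto
  obtain B where B: "\<And>t. (1 + norm t) ^ Suc N * norm (h w0 t) \<le> B"
    using rapidly_decreasingE[OF schwartz_pdl_rapidly_decreasing[OF h0, of "[]"], of "Suc N"] by auto
  obtain C3 where C3: "\<And>y s. norm y \<le> 1 \<Longrightarrow>
      (1 + norm s) ^ N * norm (h w0 (s - y) - h w0 s) \<le> C3 * norm y"
    using schwartz_translation_lipschitz[OF h0, of N] by blast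
  define K where "K = (2 + norm x0) ^ N * \<bar>C1\<bar>
    + 2 * pi * (norm x0 + norm w0 + 2) * (2 + norm x0) ^ Suc N * B + (1 + norm x0) ^ N * \<bar>C3\<bar>"
  have "(1 + norm t) ^ N * norm (pdl is (rho p \<phi>) t - pdl is (rho p0 \<phi>) t) \<le> K * dist p p0"
    if "dist p p0 \<le> 1" for p t
  proof -
    obtain x w where p: "p = (x, w)" by fastforce
    define \<delta> where "\<delta> = dist p p0"
    have \<delta>: "\<delta> = norm (x - x0, w - w0)"
      unfolding \<delta>_def p p0 dist_norm by simp
    have x: "norm (x - x0) \<le> \<delta>" and w: "norm (w - w0) \<le> \<delta>"
      using norm_fst_le norm_snd_le unfolding \<delta> by fastforce+
    have "\<delta> \<le> 1"
      using that unfolding \<delta>_def .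
    have "norm x \<le> 1 + norm x0"
      using norm_triangle_ineq[of x0 "x - x0"] x \<open>\<delta> \<le> 1\<close> by simp
    have "pdl is (rho p \<phi>) t - pdl is (rho p0 \<phi>) t
        = rho_phase x w t * (h w (t - x) - h w0 (t - x))
          + (rho_phase x w t - rho_phase x0 w0 t) * h w0 (t - x)
          + rho_phase x0 w0 t * (h w0 ((t - x0) - (x - x0)) - h w0 (t - x0))"
      unfolding p p0 pdl_rho[OF \<phi>] rho_apply h_def by (simp add: algebra_simps)
    also have "norm \<dots> \<le> norm (h w (t - x) - h w0 (t - x))
          + norm ((rho_phase x w t - rho_phase x0 w0 t) * h w0 (t - x))
          + norm (h w0 ((t - x0) - (x - x0)) - h w0 (t - x0))"
      by (rule order_trans[OF norm_triangle_le[OF add_mono[OF norm_triangle_ineq order_refl]]])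
        (simp add: norm_mult)
    finally have "(1 + norm t) ^ N * norm (pdl is (rho p \<phi>) t - pdl is (rho p0 \<phi>) t)
        \<le> (1 + norm t) ^ N * norm (h w (t - x) - h w0 (t - x))
          + (1 + norm t) ^ N * norm ((rho_phase x w t - rho_phase x0 w0 t) * h w0 (t - x))
          + (1 + norm t) ^ N * norm (h w0 ((t - x0) - (x - x0)) - h w0 (t - x0))"
      by (simp add: mult_left_mono flip: distrib_left)
    also have "\<dots> \<le> (2 + norm x0) ^ N * (\<bar>C1\<bar> * \<delta>)
          + 2 * pi * (norm x0 + norm w0 + 2) * (2 + norm x0) ^ Suc N * B * \<delta>
          + (1 + norm x0) ^ N * (\<bar>C3\<bar> * \<delta>)"
    proof (intro add_mono)
      have "(1 + norm s) ^ N * norm (h w s - h w0 s) \<le> \<bar>C1\<bar> * \<delta>" for s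
        using C1[of w s] w \<open>\<delta> \<le> 1\<close> by (smt (verit) abs_ge_self mult_mono norm_ge_zero)
      from weighted_bound_shift[OF this \<open>norm x \<le> 1 + norm x0\<close>]
      show "(1 + norm t) ^ N * norm (h w (t - x) - h w0 (t - x)) \<le> (2 + norm x0) ^ N * (\<bar>C1\<bar> * \<delta>)"
        by simp
      show "(1 + norm t) ^ N * norm ((rho_phase x w t - rho_phase x0 w0 t) * h w0 (t - x))
          \<le> 2 * pi * (norm x0 + norm w0 + 2) * (2 + norm x0) ^ Suc N * B * \<delta>"
        by (rule weighted_rho_phase_diff_bound[OF B x w \<open>\<delta> \<le> 1\<close>])
      have "(1 + norm s) ^ N * norm (h w0 (s - (x - x0)) - h w0 s) \<le> \<bar>C3\<bar> * \<delta>" for s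
        using C3[of "x - x0" s] x \<open>\<delta> \<le> 1\<close> by (smt (verit) abs_ge_self mult_mono norm_ge_zero)
      from weighted_bound_shift[OF this order_refl]
      show "(1 + norm t) ^ N * norm (h w0 ((t - x0) - (x - x0)) - h w0 (t - x0))
          \<le> (1 + norm x0) ^ N * (\<bar>C3\<bar> * \<delta>)" .
    qed
    also have "\<dots> = K * dist p p0"
      unfolding K_def \<delta>_def by (simp add: algebra_simps)
    finally show ?thesis .
  qed
  then show ?thesis by blast
qed

lemma sch_seminorm_bounded:
  fixes f :: "real^'n::finite \<Rightarrow> complex"
  assumes "\<And>t. (1 + norm t) ^ N * (\<Sum>is\<in>{is::'n list. length is \<le> N}. norm (pdl is f t)) \<le> M"
  shows "0 \<le> sch_seminorm N f" and "sch_seminorm N f \<le> M"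
proof -
  have "bdd_above (range (\<lambda>t. (1 + norm t) ^ N * (\<Sum>is\<in>{is::'n list. length is \<le> N}. norm (pdl is f t))))"
    using assms by (intro bdd_aboveI2)
  have "0 \<le> (1 + norm (0 :: real^'n)) ^ N * (\<Sum>is\<in>{is::'n list. length is \<le> N}. norm (pdl is f 0))"
    by (intro mult_nonneg_nonneg sum_nonneg) auto
  also have "\<dots> \<le> sch_seminorm N f"
    unfolding sch_seminorm_def by (rule cSUP_upper[OF _ \<open>bdd_above _\<close>]) simp
  finally show "0 \<le> sch_seminorm N f" .
  show "sch_seminorm N f \<le> M"
    unfolding sch_seminorm_def by (rule cSUP_least) (auto intro: assms)
qed

lemma sch_seminorm_rho_diff_lipschitz:
  fixes \<phi> :: "real^'n::finite \<Rightarrow> complex"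
  assumes \<phi>: "\<phi> \<in> schwartz"
  obtains K where "\<And>p. dist p p0 \<le> 1 \<Longrightarrow>
      0 \<le> sch_seminorm N (\<lambda>t. rho p \<phi> t - rho p0 \<phi> t) \<and>
      sch_seminorm N (\<lambda>t. rho p \<phi> t - rho p0 \<phi> t) \<le> K * dist p p0"
proof -
  obtain Kf where Kf: "\<And>is p t. dist p p0 \<le> 1 \<Longrightarrow>
      (1 + norm t) ^ N * norm (pdl is (rho p \<phi>) t - pdl is (rho p0 \<phi>) t) \<le> Kf is * dist p p0"
    using pdl_rho_lipschitz[OF \<phi>] by metis
  define L where "L = {is::'n list. length is \<le> N}"
  have "finite L"
    using finite_lists_length_le[of "UNIV :: 'n set" N] unfolding L_def by simp
  have bound: "(1 + norm t) ^ N * (\<Sum>is\<in>L. norm (pdl is (\<lambda>t. rho p \<phi> t - rho p0 \<phi> t) t))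
      \<le> (\<Sum>is\<in>L. \<bar>Kf is\<bar>) * dist p p0" if "dist p p0 \<le> 1" for p t
  proof -
    have "smooth_fun (rho p \<phi>)" and "smooth_fun (rho p0 \<phi>)"
      using schwartz_rho[OF \<phi>] by (auto simp: schwartz_iff)
    from pdl_lincomb[OF this, of _ 1 "-1"]
    have "pdl is (\<lambda>t. rho p \<phi> t - rho p0 \<phi> t) t = pdl is (rho p \<phi>) t - pdl is (rho p0 \<phi>) t" for "is"
      by (simp add: fun_eq_iff)
    then have "(1 + norm t) ^ N * (\<Sum>is\<in>L. norm (pdl is (\<lambda>t. rho p \<phi> t - rho p0 \<phi> t) t))
        = (\<Sum>is\<in>L. (1 + norm t) ^ N * norm (pdl is (rho p \<phi>) t - pdl is (rho p0 \<phi>) t))"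
      by (simp add: sum_distrib_left)
    also have "\<dots> \<le> (\<Sum>is\<in>L. \<bar>Kf is\<bar> * dist p p0)"
      by (intro sum_mono order_trans[OF Kf[OF that]] mult_right_mono) simp_all
    finally show ?thesis
      by (simp add: sum_distrib_right)
  qed
  show ?thesis
    using that sch_seminorm_bounded[OF bound[unfolded L_def]] by blast
qed

lemma lin_on_schwartz_scale:
  assumes "lin_on_schwartz u" and "f \<in> schwartz"
  shows "u (\<lambda>x. a * f x) = a * u f"
proof -
  have "u (\<lambda>x. a * f x + 0 * f x) = a * u f + 0 * u f"
    using assms unfolding lin_on_schwartz_def by blast
  then show ?thesis by simp
qed

lemma lin_on_schwartz_diff:
  assumes "lin_on_schwartz u" and "f \<in> schwartz" and "g \<in> schwartz"
  shows "u (\<lambda>x. f x - g x) = u f - u g"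
proof -
  have "u (\<lambda>x. 1 * f x + (- 1) * g x) = 1 * u f + (- 1) * u g"
    using assms unfolding lin_on_schwartz_def by blast
  then show ?thesis by simp
qed

lemma tempered_rho_lipschitz:
  fixes \<phi> :: "real^'n::finite \<Rightarrow> complex"
  assumes u: "tempered u" and \<phi>: "\<phi> \<in> schwartz"
  obtains K where "\<And>p. dist p p0 \<le> 1 \<Longrightarrow> dist (u (rho p \<phi>)) (u (rho p0 \<phi>)) \<le> K * dist p p0"
proof -
  obtain C N where C: "\<And>f. f \<in> schwartz \<Longrightarrow> norm (u f) \<le> C * sch_seminorm N f"
    using u unfolding tempered_def cont_on_schwartz_def by blast
  obtain K where K: "\<And>p. dist p p0 \<le> 1 \<Longrightarrow>
      0 \<le> sch_seminorm N (\<lambda>t. rho p \<phi> t - rho p0 \<phi> t) \<and>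
      sch_seminorm N (\<lambda>t. rho p \<phi> t - rho p0 \<phi> t) \<le> K * dist p p0"
    using sch_seminorm_rho_diff_lipschitz[OF \<phi>] by blast
  have "dist (u (rho p \<phi>)) (u (rho p0 \<phi>)) \<le> (\<bar>C\<bar> * K) * dist p p0" if "dist p p0 \<le> 1" for p
  proof -
    have "rho p \<phi> \<in> schwartz" and "rho p0 \<phi> \<in> schwartz"
      using schwartz_rho[OF \<phi>] by auto
    then have "dist (u (rho p \<phi>)) (u (rho p0 \<phi>)) = norm (u (\<lambda>t. rho p \<phi> t - rho p0 \<phi> t))"
      using u by (simp add: dist_norm tempered_def lin_on_schwartz_diff)
    also have "\<dots> \<le> C * sch_seminorm N (\<lambda>t. rho p \<phi> t - rho p0 \<phi> t)"
      by (intro C schwartz_lincomb[of _ _ 1 "-1", simplified] schwartz_rho \<phi>)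
    also have "\<dots> \<le> \<bar>C\<bar> * (K * dist p p0)"
      using K[OF that] by (intro mult_mono) auto
    finally show ?thesis by simp
  qed
  then show ?thesis using that by blast
qed

lemma isCont_if_lipschitz_at:
  fixes f :: "'a::metric_space \<Rightarrow> 'b::metric_space"
  assumes "0 < r" and lip: "\<And>x. dist x x0 \<le> r \<Longrightarrow> dist (f x) (f x0) \<le> K * dist x x0"
  shows "isCont f x0"
  unfolding continuous_at_eps_delta
proof (intro allI impI)
  fix e :: real assume "0 < e"
  define d where "d = min r (e / (\<bar>K\<bar> + 1))"
  have "0 < d" using \<open>0 < r\<close> \<open>0 < e\<close> by (simp add: d_def)
  have "dist (f x) (f x0) < e" if "dist x x0 < d" for x
  proof -
    have "dist (f x) (f x0) \<le> (\<bar>K\<bar> + 1) * dist x x0"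
      using lip[of x] that by (smt (verit) d_def abs_ge_self mult_right_mono zero_le_dist)
    also have "\<dots> < (\<bar>K\<bar> + 1) * d"
      using that by (intro mult_strict_left_mono) auto
    also have "\<dots> \<le> (\<bar>K\<bar> + 1) * (e / (\<bar>K\<bar> + 1))"
      by (intro mult_left_mono) (auto simp: d_def)
    also have "\<dots> = e"
      by simp
    finally show ?thesis .
  qed
  with \<open>0 < d\<close> show "\<exists>d>0. \<forall>x. dist x x0 < d \<longrightarrow> dist (f x) (f x0) < e"
    by blast
qed

lemma continuous_on_rho_dist:
  fixes \<phi> :: "real^'n::finite \<Rightarrow> complex"
  assumes "tempered u" and "\<phi> \<in> schwartz"
  shows "continuous_on UNIV (\<lambda>\<nu>. rho_dist \<nu> u \<phi>)"
proof -
  have "continuous_on UNIV (\<lambda>p. u (rho p \<phi>))"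
    unfolding continuous_on_eq_continuous_at[OF open_UNIV]
  proof
    fix p0
    obtain K where "\<And>p. dist p p0 \<le> 1 \<Longrightarrow> dist (u (rho p \<phi>)) (u (rho p0 \<phi>)) \<le> K * dist p p0"
      using tempered_rho_lipschitz[OF assms] by blast
    then show "isCont (\<lambda>p. u (rho p \<phi>)) p0"
      by (rule isCont_if_lipschitz_at[OF zero_less_one])
  qed
  moreover have "continuous_on UNIV (\<lambda>\<nu>::(real^'n) \<times> (real^'n). (- fst \<nu>, snd \<nu>))"
    by (intro continuous_intros)
  ultimately show ?thesis
    unfolding rho_dist_def by (rule continuous_on_compose2) simp
qed

definition rho_stabilizer ::
    "((real^'n::finite \<Rightarrow> complex) \<Rightarrow> complex) set \<Rightarrow> ((real^'n) \<times> (real^'n)) set" where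
  "rho_stabilizer U = {\<nu>. \<exists>c. \<forall>u\<in>U. \<forall>\<phi>\<in>schwartz. rho_dist \<nu> u \<phi> = c * u \<phi>}"

lemma zero_in_rho_stabilizer: "0 \<in> rho_stabilizer U"
  unfolding rho_stabilizer_def rho_dist_def
  by (rule CollectI exI[of _ 1])+ (simp add: rho_zero[unfolded zero_prod_def])

lemma add_in_rho_stabilizer:
  assumes lin: "\<And>u. u \<in> U \<Longrightarrow> lin_on_schwartz u"
    and "a \<in> rho_stabilizer U" and "b \<in> rho_stabilizer U"
  shows "a + b \<in> rho_stabilizer U"
proof -
  obtain ca cb where
    ca: "\<And>u \<phi>. u \<in> U \<Longrightarrow> \<phi> \<in> schwartz \<Longrightarrow> u (rho (- fst a, snd a) \<phi>) = ca * u \<phi>" and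
    cb: "\<And>u \<phi>. u \<in> U \<Longrightarrow> \<phi> \<in> schwartz \<Longrightarrow> u (rho (- fst b, snd b) \<phi>) = cb * u \<phi>"
    using assms(2,3) unfolding rho_stabilizer_def rho_dist_def by blast
  define k where "k = rho_cocycle (- fst a, snd a) (- fst b, snd b)"
  have "u (rho (- fst (a + b), snd (a + b)) \<phi>) = ca * cb / k * u \<phi>"
    if u: "u \<in> U" and \<phi>: "\<phi> \<in> schwartz" for u \<phi>
  proof -
    have "rho (- fst (a + b), snd (a + b)) \<phi>
        = (\<lambda>t. inverse k * rho (- fst a, snd a) (rho (- fst b, snd b) \<phi>) t)"
      unfolding rho_rho k_def by (simp add: mult.assoc[symmetric])
    then have "u (rho (- fst (a + b), snd (a + b)) \<phi>) = inverse k * u (rho (- fst a, snd a) (rho (- fst b, snd b) \<phi>))"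
      by (simp add: lin_on_schwartz_scale[OF lin[OF u] schwartz_rho[OF schwartz_rho[OF \<phi>]]])
    also have "\<dots> = ca * cb / k * u \<phi>"
      using ca[OF u schwartz_rho[OF \<phi>]] cb[OF u \<phi>] by (simp add: field_simps)
    finally show ?thesis .
  qed
  then show ?thesis
    unfolding rho_stabilizer_def rho_dist_def by blast
qed

lemma uminus_in_rho_stabilizer:
  assumes lin: "\<And>u. u \<in> U \<Longrightarrow> lin_on_schwartz u" and "a \<in> rho_stabilizer U"
  shows "- a \<in> rho_stabilizer U"
proof -
  obtain ca where
    ca: "\<And>u \<phi>. u \<in> U \<Longrightarrow> \<phi> \<in> schwartz \<Longrightarrow> u (rho (- fst a, snd a) \<phi>) = ca * u \<phi>"
    using assms(2) unfolding rho_stabilizer_def rho_dist_def by blast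
  define k where "k = rho_cocycle (- fst a, snd a) (fst a, - snd a)"
  have inverse: "ca * u (rho (fst a, - snd a) \<phi>) = k * u \<phi>"
    if u: "u \<in> U" and \<phi>: "\<phi> \<in> schwartz" for u \<phi>
  proof -
    have "ca * u (rho (fst a, - snd a) \<phi>) = u (rho (- fst a, snd a) (rho (fst a, - snd a) \<phi>))"
      using ca[OF u schwartz_rho[OF \<phi>]] by simp
    also have "rho (- fst a, snd a) (rho (fst a, - snd a) \<phi>) = (\<lambda>t. k * \<phi> t)"
      unfolding rho_rho k_def by (simp add: rho_zero[unfolded zero_prod_def])
    also have "u \<dots> = k * u \<phi>"
      by (rule lin_on_schwartz_scale[OF lin[OF u] \<phi>])
    finally show ?thesis .
  qed
  have "u (rho (fst a, - snd a) \<phi>) = k / ca * u \<phi>"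
    if u: "u \<in> U" and \<phi>: "\<phi> \<in> schwartz" for u \<phi>
  proof (cases "ca = 0")
    case True
    \<comment> \<open>then every u in U vanishes on the Schwartz space, and k / 0 = 0 is a valid factor\<close>
    then have "u (rho (fst a, - snd a) \<phi>) = 0"
      using inverse[OF u schwartz_rho[OF \<phi>]] by (simp add: k_def)
    then show ?thesis using True by simp
  next
    case False
    then show ?thesis
      using inverse[OF u \<phi>] by (simp add: field_simps)
  qed
  then have "\<forall>u\<in>U. \<forall>\<phi>\<in>schwartz. u (rho (- fst (- a), snd (- a)) \<phi>) = k / ca * u \<phi>"
    by simp
  then show ?thesis
    unfolding rho_stabilizer_def rho_dist_def by blast
qed

lemma closed_rho_stabilizer:
  assumes tempered: "\<And>u. u \<in> U \<Longrightarrow> tempered u"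
  shows "closed (rho_stabilizer U)"
proof (cases "\<exists>u0\<in>U. \<exists>\<phi>0\<in>schwartz. u0 \<phi>0 \<noteq> 0")
  case True
  then obtain u0 \<phi>0 where u0: "u0 \<in> U" and \<phi>0: "\<phi>0 \<in> schwartz" and "u0 \<phi>0 \<noteq> 0"
    by blast
  have "rho_stabilizer U
      = (\<Inter>u\<in>U. \<Inter>\<phi>\<in>schwartz. {\<nu>. rho_dist \<nu> u \<phi> * u0 \<phi>0 = rho_dist \<nu> u0 \<phi>0 * u \<phi>})"
  proof (intro set_eqI iffI)
    fix \<nu> assume "\<nu> \<in> rho_stabilizer U"
    then show "\<nu> \<in> (\<Inter>u\<in>U. \<Inter>\<phi>\<in>schwartz. {\<nu>. rho_dist \<nu> u \<phi> * u0 \<phi>0 = rho_dist \<nu> u0 \<phi>0 * u \<phi>})"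
      using u0 \<phi>0 unfolding rho_stabilizer_def by auto
  next
    fix \<nu> assume "\<nu> \<in> (\<Inter>u\<in>U. \<Inter>\<phi>\<in>schwartz. {\<nu>. rho_dist \<nu> u \<phi> * u0 \<phi>0 = rho_dist \<nu> u0 \<phi>0 * u \<phi>})"
    then have "\<forall>u\<in>U. \<forall>\<phi>\<in>schwartz. rho_dist \<nu> u \<phi> = rho_dist \<nu> u0 \<phi>0 / u0 \<phi>0 * u \<phi>"
      using \<open>u0 \<phi>0 \<noteq> 0\<close> by (auto simp: field_simps)
    then show "\<nu> \<in> rho_stabilizer U"
      unfolding rho_stabilizer_def by blast
  qed
  also have "closed \<dots>"
    using u0 \<phi>0 tempered
    by (intro closed_INT ballI closed_Collect_eq continuous_intros continuous_on_rho_dist) auto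
  finally show ?thesis .
next
  case False
  then have "rho_dist \<nu> u \<phi> = 0 * u \<phi>" if "u \<in> U" and "\<phi> \<in> schwartz" for \<nu> u \<phi>
    using schwartz_rho[OF that(2)] that(1) unfolding rho_dist_def by simp
  then have "rho_stabilizer U = UNIV"
    unfolding rho_stabilizer_def by blast
  then show ?thesis by simp
qed

theorem lemma4p3:
  fixes d :: nat
    and T :: "(real^'n::finite \<Rightarrow> complex) \<Rightarrow> ((real^'n \<Rightarrow> complex) \<Rightarrow> complex)"
    and H :: "((real^'n) \<times> (real^'n)) set"
  assumes "d \<ge> 1" and "CARD('n) = 2 * d"
    and "cont_lin_op T"
    and "\<exists>F\<in>schwartz. \<exists>\<phi>\<in>schwartz. T F \<phi> \<noteq> 0"
    and "\<exists>\<Phi> :: (real^'n) \<times> (real^'n) \<Rightarrow> (real^'n) \<times> (real^'n). \<forall>l. \<exists>c::complex.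
           \<forall>F\<in>schwartz. \<forall>\<phi>\<in>schwartz. T (rho l F) \<phi> = c * rho_dist (\<Phi> l) (T F) \<phi>"
    and "H = {\<nu>. \<exists>c::complex. \<forall>F\<in>schwartz. \<forall>\<phi>\<in>schwartz.
                  rho_dist \<nu> (T F) \<phi> = c * T F \<phi>}"
  shows "closed H \<and> 0 \<in> H \<and> (\<forall>a\<in>H. \<forall>b\<in>H. a + b \<in> H) \<and> (\<forall>a\<in>H. - a \<in> H)"
proof -
  have H: "H = rho_stabilizer (T ` schwartz)"
    unfolding assms(6) rho_stabilizer_def ball_simps(9) ..
  have tempered: "\<And>u. u \<in> T ` schwartz \<Longrightarrow> tempered u"
    using assms(3) unfolding cont_lin_op_def by blast
  then have lin: "\<And>u. u \<in> T ` schwartz \<Longrightarrow> lin_on_schwartz u"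
    unfolding tempered_def by blast
  show ?thesis
    unfolding H
    by (intro conjI ballI closed_rho_stabilizer zero_in_rho_stabilizer add_in_rho_stabilizer
        uminus_in_rho_stabilizer tempered lin)
qed

end
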